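(* Let $G$ be a finite group with a fixed supercharacter theory and let $\iota,\alpha\in\mathrm{scf}(G)$ with $\langle\iota,\alpha\rangle=1$; set $\beta=\alpha$. Then the linear character $\alpha_\bullet\rangle$ of $\mathcal{H}_{(\iota,\alpha,\beta)}$ is odd, i.e. $\mathrm{Res}_{\mathcal{H}_n}(\alpha_\bullet\rangle^{-1})=(-1)^n\,\mathrm{Res}_{\mathcal{H}_n}(\alpha_\bullet\rangle)$ for every $n$, where $\mathcal{H}_n=\mathrm{scf}(G^{n-1})$ is the degree-$n$ component.
   Context: Supercharacter theory: set partition $\mathtt{Cl}$ of $G$ and pairwise orthogonal characters $\mathtt{Ch}$ forming a basis of $\mathrm{scf}(G)=\{\psi:G\to\mathbb{C}$ constant on blocks of $\mathtt{Cl}\}$, with $\mathbf{reg}\in\mathrm{scf}(G)$, $\mathbb{1}\in\mathtt{Ch}$; $\langle\psi,\gamma\rangle=|G|^{-1}\sum_g\psi(g)\overline{\gamma(g)}$. For $n\ge1$, $G^{n-1}=G\times\cdots\times G\times\{1\}$ ($n-1$ copies of $G$), $\mathrm{scf}(G^{n-1})$ is spanned by $\psi_1\otimes\cdots\otimes\psi_{n-1}\otimes\chi^{()}:(g_1,\dots,g_{n-1},1)\mapsto\prod\psi_j(g_j)$ ($\chi^{()}$ trivial character of the trivial group), with the usual inner product of $G^{n-1}$; $\mathrm{scf}(G^{-1}):=\mathbb{C}\chi^\emptyset$, $\langle\chi^\emptyset,\chi^\emptyset\rangle=1$. $\mathcal{H}_{(\iota,\alpha,\beta)}=\bigoplus_{n\ge0}\mathrm{scf}(G^{n-1})$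 is the graded connected Hopf algebra with unit $\chi^\emptyset$, product $(\gamma_1\otimes\cdots\otimes\gamma_{m-1}\otimes\chi^{()})\cdot(\psi_1\otimes\cdots\otimes\psi_{n-1}\otimes\chi^{()})=\gamma_1\otimes\cdots\otimes\gamma_{m-1}\otimes\iota\otimes\psi_1\otimes\cdots\otimes\psi_{n-1}\otimes\chi^{()}$, coproduct $\Delta(\psi)=\sum_{A\subseteq[n]}\psi^{A}\otimes\psi^{[n]\setminus A}$ for $\psi=\psi_1\otimes\cdots\otimes\psi_{n-1}\otimes\chi^{()}$, where $\psi^\emptyset=\chi^\emptyset$; for nonempty $A=\{a_1<\dots<a_k\}$, $\psi^{A}=\lambda_A\,x_{a_1}\otimes\cdots\otimes x_{a_{k-1}}\otimes\chi^{()}$ with $x_{a_i}=\psi_{a_i}$ if $a_{i+1}=a_i+1$, else $\langle\psi_{a_i},\alpha\rangle\iota$, and $\lambda_A=\langle\psi_{a_k},\alpha\rangle$ if $a_k<n$, $1$ if $a_k=n$; $\psi^{[n]\setminus A}$ is the same with $\beta$ in place of $\alpha$; counit = projection to degree 0. $\alpha_\bullet\rangle:\mathcal{H}\to\mathbb{C}$ is the linear map $\gamma\mapsto\langle\gamma,\alpha_n\rangle$ on degree $n$, where $\alpha_n=\alpha^{\otimes(n-1)}\otimes\chi^{()}$ and $\alpha_0=\chi^\emptyset$; it is an algebra homomorphism (linear character), and the inverse is taken in the group of linear characters under convolution $\zeta\circ\xi=m_{\mathbb{C}}(\zeta\otimes\xi)\Delta$. *)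

theory Defs
  imports "HOL-Algebra.Group" "HOL-Library.Disjoint_Sets" "Jordan_Normal_Form.Matrix"
begin

definition ip :: "('a, 'b) monoid_scheme \<Rightarrow> ('a \<Rightarrow> complex) \<Rightarrow> ('a \<Rightarrow> complex) \<Rightarrow> complex" where
  "ip G \<psi> \<gamma> = (\<Sum>g\<in>carrier G. \<psi> g * cnj (\<gamma> g)) / of_nat (card (carrier G))"

definition is_character :: "('a, 'b) monoid_scheme \<Rightarrow> ('a \<Rightarrow> complex) \<Rightarrow> bool" where
  "is_character G \<chi> \<longleftrightarrow> (\<exists>(d::nat) (\<rho>::'a \<Rightarrow> complex mat).
      (\<forall>g\<in>carrier G. \<rho> g \<in> carrier_mat d d) \<and>
      (\<forall>g\<in>carrier G. \<forall>h\<in>carrier G. \<rho> (g \<otimes>\<^bsub>G\<^esub> h) = \<rho> g * \<rho> h) \<and>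
      \<rho> \<one>\<^bsub>G\<^esub> = 1\<^sub>m d \<and>
      (\<forall>g\<in>carrier G. \<chi> g = (\<Sum>i<d. \<rho> g $$ (i, i))))"

definition scf :: "('a, 'b) monoid_scheme \<Rightarrow> 'a set set \<Rightarrow> ('a \<Rightarrow> complex) set" where
  "scf G Cl = {\<psi>. \<psi> \<in> extensional (carrier G) \<and> (\<forall>K\<in>Cl. \<forall>g\<in>K. \<forall>h\<in>K. \<psi> g = \<psi> h)}"

definition reg_char :: "('a, 'b) monoid_scheme \<Rightarrow> 'a \<Rightarrow> complex" where
  "reg_char G g = (if g = \<one>\<^bsub>G\<^esub> then of_nat (card (carrier G)) else 0)"

definition triv_char :: "('a, 'b) monoid_scheme \<Rightarrow> 'a \<Rightarrow> complex" where
  "triv_char G g = (if g \<in> carrier G then 1 else 0)"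

definition supercharacter_theory ::
  "('a, 'b) monoid_scheme \<Rightarrow> 'a set set \<Rightarrow> ('a \<Rightarrow> complex) set \<Rightarrow> bool" where
  "supercharacter_theory G Cl Ch \<longleftrightarrow>
     partition_on (carrier G) Cl \<and>
     finite Ch \<and> Ch \<subseteq> scf G Cl \<and>
     (\<forall>\<chi>\<in>Ch. is_character G \<chi>) \<and>
     (\<forall>\<chi>\<in>Ch. \<forall>\<chi>'\<in>Ch. \<chi> \<noteq> \<chi>' \<longrightarrow> ip G \<chi> \<chi>' = 0) \<and>
     (\<forall>c. (\<forall>g. (\<Sum>\<chi>\<in>Ch. c \<chi> * \<chi> g) = 0) \<longrightarrow> (\<forall>\<chi>\<in>Ch. c \<chi> = 0)) \<and>
     (\<forall>\<psi>\<in>scf G Cl. \<exists>c. \<psi> = (\<lambda>g. \<Sum>\<chi>\<in>Ch. c \<chi> * \<chi> g)) \<and>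
     reg_char G \<in> scf G Cl \<and>
     triv_char G \<in> Ch"

text \<open>Elements of G^(n-1) x {1} are encoded as tuples g :: nat => 'a with
  g j in G for j < n-1 (coordinate j+1 of the paper) and g j = 1 for j >= n-1.
  For n = 0 and n = 1 this is a single point, so H_0 = C chi^emptyset and
  H_1 = C chi^().\<close>
definition tup :: "('a, 'b) monoid_scheme \<Rightarrow> nat \<Rightarrow> (nat \<Rightarrow> 'a) set" where
  "tup G n = {g. (\<forall>j<n-1. g j \<in> carrier G) \<and> (\<forall>j. n - 1 \<le> j \<longrightarrow> g j = \<one>\<^bsub>G\<^esub>)}"

text \<open>scf(G^(n-1)): functions on tup G n (zero outside) constant on products of blocks;
  this is exactly the span of the tensors psi_1 (x) ... (x) psi_(n-1) (x) chi^().\<close>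
definition Hn :: "('a, 'b) monoid_scheme \<Rightarrow> 'a set set \<Rightarrow> nat \<Rightarrow> ((nat \<Rightarrow> 'a) \<Rightarrow> complex) set" where
  "Hn G Cl n = {f. (\<forall>g. g \<notin> tup G n \<longrightarrow> f g = 0) \<and>
      (\<forall>g\<in>tup G n. \<forall>h\<in>tup G n. (\<forall>j<n-1. \<exists>K\<in>Cl. g j \<in> K \<and> h j \<in> K) \<longrightarrow> f g = f h)}"

definition pos :: "nat set \<Rightarrow> nat \<Rightarrow> nat" where
  "pos S j = card {a\<in>S. a < j}"

text \<open>For A a subset of [n] = {1..n} with complement B, the element psi^A (x) psi^B,
  written as a function of (x,y) in G^(|A|-1) x G^(|B|-1); this is the linear extension
  of the formula in the paper.  Coordinate j in {1..n-1} of psi (stored at index j-1)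
  is copied when j and j+1 lie in the same part, and is contracted against alpha
  (if j in A) or beta (if j in B) otherwise; iota is inserted at the positions
  a_i (i < k) with a_(i+1) <> a_i + 1 (resp. for B).\<close>
definition Delta ::
  "('a, 'b) monoid_scheme \<Rightarrow> ('a \<Rightarrow> complex) \<Rightarrow> ('a \<Rightarrow> complex) \<Rightarrow> ('a \<Rightarrow> complex) \<Rightarrow>
   nat \<Rightarrow> nat set \<Rightarrow> ((nat \<Rightarrow> 'a) \<Rightarrow> complex) \<Rightarrow> (nat \<Rightarrow> 'a) \<Rightarrow> (nat \<Rightarrow> 'a) \<Rightarrow> complex" where
  "Delta G \<iota> \<alpha> \<beta> n A \<psi> x y =
    (let B = {1..n} - A;
         C = {j\<in>{1..n-1}. (j \<in> A) \<noteq> (Suc j \<in> A)}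
     in if x \<in> tup G (card A) \<and> y \<in> tup G (card B) then
        (\<Prod>a\<in>{a\<in>A. Suc a \<notin> A \<and> a < Max A}. \<iota> (x (pos A a))) *
        (\<Prod>b\<in>{b\<in>B. Suc b \<notin> B \<and> b < Max B}. \<iota> (y (pos B b))) *
        (\<Sum>g\<in>{g\<in>tup G n. \<forall>j\<in>{1..n-1}. (j \<in> A) = (Suc j \<in> A) \<longrightarrow>
                 g (j - 1) = (if j \<in> A then x (pos A j) else y (pos B j))}.
            \<psi> g * (\<Prod>j\<in>C. cnj ((if j \<in> A then \<alpha> else \<beta>) (g (j - 1)))))
        / of_nat (card (carrier G)) ^ card C
     else 0)"

text \<open>Graded linear functionals H -> C, represented degreewise; (zeta o xi) = m (zeta (x) xi) Delta.\<close>
definition conv ::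
  "('a, 'b) monoid_scheme \<Rightarrow> ('a \<Rightarrow> complex) \<Rightarrow> ('a \<Rightarrow> complex) \<Rightarrow> ('a \<Rightarrow> complex) \<Rightarrow>
   (nat \<Rightarrow> ((nat \<Rightarrow> 'a) \<Rightarrow> complex) \<Rightarrow> complex) \<Rightarrow> (nat \<Rightarrow> ((nat \<Rightarrow> 'a) \<Rightarrow> complex) \<Rightarrow> complex) \<Rightarrow>
   nat \<Rightarrow> ((nat \<Rightarrow> 'a) \<Rightarrow> complex) \<Rightarrow> complex" where
  "conv G \<iota> \<alpha> \<beta> \<zeta> \<xi> n \<psi> =
     (\<Sum>A\<in>Pow {1..n}. \<zeta> (card A) (\<lambda>x. \<xi> (n - card A) (\<lambda>y. Delta G \<iota> \<alpha> \<beta> n A \<psi> x y)))"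

definition counit :: "('a, 'b) monoid_scheme \<Rightarrow> nat \<Rightarrow> ((nat \<Rightarrow> 'a) \<Rightarrow> complex) \<Rightarrow> complex" where
  "counit G n \<psi> = (if n = 0 then \<psi> (\<lambda>_. \<one>\<^bsub>G\<^esub>) else 0)"

definition graded_functional ::
  "('a, 'b) monoid_scheme \<Rightarrow> 'a set set \<Rightarrow> (nat \<Rightarrow> ((nat \<Rightarrow> 'a) \<Rightarrow> complex) \<Rightarrow> complex) \<Rightarrow> bool" where
  "graded_functional G Cl \<xi> \<longleftrightarrow> (\<forall>n.
     (\<forall>f. f \<notin> Hn G Cl n \<longrightarrow> \<xi> n f = 0) \<and>
     (\<forall>f\<in>Hn G Cl n. \<forall>h\<in>Hn G Cl n. \<xi> n (\<lambda>t. f t + h t) = \<xi> n f + \<xi> n h) \<and>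
     (\<forall>c. \<forall>f\<in>Hn G Cl n. \<xi> n (\<lambda>t. c * f t) = c * \<xi> n f))"

definition conv_inv ::
  "('a, 'b) monoid_scheme \<Rightarrow> 'a set set \<Rightarrow> ('a \<Rightarrow> complex) \<Rightarrow> ('a \<Rightarrow> complex) \<Rightarrow> ('a \<Rightarrow> complex) \<Rightarrow>
   (nat \<Rightarrow> ((nat \<Rightarrow> 'a) \<Rightarrow> complex) \<Rightarrow> complex) \<Rightarrow> (nat \<Rightarrow> ((nat \<Rightarrow> 'a) \<Rightarrow> complex) \<Rightarrow> complex)" where
  "conv_inv G Cl \<iota> \<alpha> \<beta> \<zeta> = (THE \<xi>. graded_functional G Cl \<xi> \<and>
     (\<forall>n. \<forall>\<psi>\<in>Hn G Cl n. conv G \<iota> \<alpha> \<beta> \<zeta> \<xi> n \<psi> = counit G n \<psi> \<and>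
                         conv G \<iota> \<alpha> \<beta> \<xi> \<zeta> n \<psi> = counit G n \<psi>))"

text \<open>The linear character alpha_bullet>: gamma |-> <gamma, alpha^(x)(n-1) (x) chi^()>
  on degree n (inner product of G^(n-1)).\<close>
definition alpha_char ::
  "('a, 'b) monoid_scheme \<Rightarrow> 'a set set \<Rightarrow> ('a \<Rightarrow> complex) \<Rightarrow> nat \<Rightarrow> ((nat \<Rightarrow> 'a) \<Rightarrow> complex) \<Rightarrow> complex" where
  "alpha_char G Cl \<alpha> n \<gamma> = (if \<gamma> \<in> Hn G Cl n then
     (\<Sum>g\<in>tup G n. \<gamma> g * cnj (\<Prod>j<n-1. \<alpha> (g j))) / of_nat (card (carrier G)) ^ (n - 1)
   else 0)"

end

theory Submission
  imports Defs
begin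

(* Fix A, a subset of [n] = {1..n}, with complement B.  The A-summand psi^A (x) psi^B of the
   coproduct pairs with alpha_|A| (x) alpha_|B| to exactly <psi, alpha_n>: the coordinates of psi
   that the coproduct cuts are contracted against alpha, the coordinates it copies are paired with
   alpha again, and each iota inserted at a break of A or of B is paired with alpha, contributing
   <iota, alpha> = 1.  So zeta = alpha_char satisfies (zeta (x) zeta)(Delta_A psi) = zeta(psi) for
   every A, and for xi_n = (-1)^n zeta_n both convolutions of zeta and xi send psi in H_n to
   zeta(psi) times an alternating sum over the subsets of [n], that is, to the counit.
   Convolution inverses are unique by induction on the degree, since the A = {} summand of
   (zeta * xi)(psi) is xi(psi). *)

section \<open>Positions in finite sets of naturals\<close>

(* For A = {a_1 < ... < a_k}, the tensor coordinates of psi^A sit at a_1, ..., a_(k-1), that is at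
   nonlast A, the one at a being stored at index pos A a.  Those at glued A are copied from psi,
   those at breaks A carry iota, and the coordinates of psi at cuts n A are contracted against
   alpha (resp. beta). *)
definition nonlast :: "nat set \<Rightarrow> nat set" where
  "nonlast A = {a\<in>A. a < Max A}"

definition glued :: "nat set \<Rightarrow> nat set" where
  "glued A = {a\<in>A. Suc a \<in> A}"

definition breaks :: "nat set \<Rightarrow> nat set" where
  "breaks A = {a\<in>A. Suc a \<notin> A \<and> a < Max A}"

definition cuts :: "nat \<Rightarrow> nat set \<Rightarrow> nat set" where
  "cuts n A = {j\<in>{1..n-1}. (j \<in> A) \<noteq> (Suc j \<in> A)}"

lemma pos_less_pos: "finite A \<Longrightarrow> a \<in> A \<Longrightarrow> b \<in> A \<Longrightarrow> a < b \<Longrightarrow> pos A a < pos A b"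
  unfolding pos_def by (rule psubset_card_mono) auto

lemma pos_less_card: "finite A \<Longrightarrow> a \<in> A \<Longrightarrow> pos A a < card A"
  unfolding pos_def by (rule psubset_card_mono) auto

lemma bij_betw_pos:
  assumes "finite A"
  shows "bij_betw (pos A) A {..<card A}"
proof -
  have inj: "inj_on (pos A) A"
    by (rule linorder_inj_onI') (use pos_less_pos[OF assms] in fastforce)
  have "pos A ` A \<subseteq> {..<card A}"
    using pos_less_card[OF assms] by auto
  moreover have "card (pos A ` A) = card {..<card A}"
    using card_image[OF inj] by simp
  ultimately show ?thesis
    using inj by (simp add: bij_betw_def card_subset_eq)
qed

lemma nonlast_eq:
  assumes "finite A" "A \<noteq> {}"
  shows "nonlast A = A - {Max A}"
  using Max_ge[OF assms(1)] by (fastforce simp: nonlast_def)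

lemma bij_betw_pos_nonlast:
  assumes "finite A"
  shows "bij_betw (pos A) (nonlast A) {..<card A - 1}"
proof (cases "A = {}")
  case True
  then show ?thesis by (simp add: nonlast_def bij_betw_def)
next
  case False
  have pos_Max: "pos A (Max A) = card A - 1"
    using nonlast_eq[OF assms False] assms False by (simp add: pos_def flip: nonlast_def)
  have "bij_betw (pos A) (A - {Max A}) ({..<card A} - {pos A (Max A)})"
    by (rule bij_betw_DiffI[OF bij_betw_pos[OF assms]])
      (auto simp: False assms pos_less_card)
  moreover have "{..<card A} - {card A - 1} = {..<card A - 1}"
    using assms False by (auto simp: card_gt_0_iff)
  ultimately show ?thesis
    using nonlast_eq[OF assms False] pos_Max by simp
qed

lemma card_nonlast: "finite A \<Longrightarrow> card (nonlast A) = card A - 1"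
  using bij_betw_same_card[OF bij_betw_pos_nonlast] by simp

lemma pos_interval:
  assumes "j \<in> {1..n}"
  shows "pos {1..n} j = j - 1"
proof -
  have "{a \<in> {1..n}. a < j} = {1..<j}"
    using assms by auto
  then show ?thesis by (simp add: pos_def)
qed

lemma finite_glued: "finite A \<Longrightarrow> finite (glued A)"
  and finite_breaks: "finite A \<Longrightarrow> finite (breaks A)"
  by (simp_all add: glued_def breaks_def)

lemma glued_subset_interval: "A \<subseteq> {1..n} \<Longrightarrow> glued A \<subseteq> {1..n-1}"
  by (force simp: glued_def)

lemma nonlast_eq_glued_Un_breaks:
  assumes "finite A"
  shows "nonlast A = glued A \<union> breaks A"
proof -
  have "a < Max A" if "Suc a \<in> A" for a
    using Max_ge[OF assms that] by simp
  then show ?thesis by (auto simp: nonlast_def glued_def breaks_def)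
qed

lemma glued_Int_breaks: "glued A \<inter> breaks A = {}"
  by (auto simp: glued_def breaks_def)

lemma glued_Int_glued_compl: "glued A \<inter> glued ({1..n} - A) = {}"
  by (auto simp: glued_def)

lemma glued_Un_glued_Int_cuts: "(glued A \<union> glued ({1..n} - A)) \<inter> cuts n A = {}"
  by (auto simp: glued_def cuts_def)

lemma interval_eq_glued_Un_cuts:
  assumes "A \<subseteq> {1..n}"
  shows "{1..n-1} = glued A \<union> glued ({1..n} - A) \<union> cuts n A"
  using glued_subset_interval[OF assms] glued_subset_interval[of "{1..n} - A" n]
  by (auto simp: glued_def cuts_def)

lemma card_nonlast_split:
  assumes "finite A"
  shows "card A - 1 = card (glued A) + card (breaks A)"
  using card_nonlast[OF assms] nonlast_eq_glued_Un_breaks[OF assms]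
    card_Un_disjoint[OF finite_glued[OF assms] finite_breaks[OF assms] glued_Int_breaks]
  by simp

lemma card_interval_split:
  assumes "A \<subseteq> {1..n}"
  shows "n - 1 = card (glued A) + card (glued ({1..n} - A)) + card (cuts n A)"
proof -
  have "finite (glued A)" "finite (glued ({1..n} - A))" "finite (cuts n A)"
    using finite_subset[OF assms] by (simp_all add: finite_glued cuts_def)
  then have "card {1..n-1} = card (glued A) + card (glued ({1..n} - A)) + card (cuts n A)"
    unfolding interval_eq_glued_Un_cuts[OF assms]
    using glued_Int_glued_compl glued_Un_glued_Int_cuts by (simp add: card_Un_disjoint)
  then show ?thesis by simp
qed

section \<open>Sums over tuples\<close>

(* Inverse of the storage convention of tup: w is indexed by the coordinates 1..n-1 of the paper. *)
definition tuple_of :: "('a, 'b) monoid_scheme \<Rightarrow> nat \<Rightarrow> (nat \<Rightarrow> 'a) \<Rightarrow> nat \<Rightarrow> 'a" where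
  "tuple_of G n w = (\<lambda>i. if i < n - 1 then w (Suc i) else \<one>\<^bsub>G\<^esub>)"

definition relabel :: "nat set \<Rightarrow> (nat \<Rightarrow> 'a) \<Rightarrow> nat \<Rightarrow> 'a" where
  "relabel A x = restrict (\<lambda>a. x (pos A a)) (nonlast A)"

lemma tup_0: "tup G 0 = {\<lambda>_. \<one>\<^bsub>G\<^esub>}"
  by (auto simp: tup_def)

lemma finite_tup:
  assumes "finite (carrier G)"
  shows "finite (tup G m)"
proof -
  let ?ext = "\<lambda>u i. if i < m - 1 then u i else \<one>\<^bsub>G\<^esub>"
  have "tup G m \<subseteq> ?ext ` PiE {..<m - 1} (\<lambda>_. carrier G)"
  proof
    fix x assume x: "x \<in> tup G m"
    then have "x = ?ext (restrict x {..<m - 1})" and "restrict x {..<m - 1} \<in> PiE {..<m - 1} (\<lambda>_. carrier G)"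
      by (auto simp: tup_def)
    then show "x \<in> ?ext ` PiE {..<m - 1} (\<lambda>_. carrier G)" by blast
  qed
  then show ?thesis
    by (rule finite_subset) (simp add: assms finite_PiE)
qed

lemma tuple_of_shift: "j \<in> {1..n-1} \<Longrightarrow> tuple_of G n w (j - 1) = w j"
  by (auto simp: tuple_of_def)

lemma tuple_of_in_tup: "(\<And>j. j \<in> {1..n-1} \<Longrightarrow> w j \<in> carrier G) \<Longrightarrow> tuple_of G n w \<in> tup G n"
  by (auto simp: tuple_of_def tup_def)

lemma sum_tup_reindex:
  assumes p: "bij_betw p X {..<m - 1}"
  shows "(\<Sum>x\<in>tup G m. F (restrict (\<lambda>a. x (p a)) X)) = (\<Sum>u\<in>PiE X (\<lambda>_. carrier G). F u)"
proof -
  let ?q = "the_inv_into X p"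
  have p_less: "p a < m - 1" if "a \<in> X" for a
    using p that by (auto simp: bij_betw_def)
  have q: "?q i \<in> X" "p (?q i) = i" if "i < m - 1" for i
    using bij_betwE[OF bij_betw_the_inv_into[OF p]] f_the_inv_into_f_bij_betw[OF p] that by auto
  have q_p: "?q (p a) = a" if "a \<in> X" for a
    using p that by (simp add: bij_betw_def the_inv_into_f_f)
  show ?thesis
  proof (rule sum.reindex_bij_witness[where j = "\<lambda>x. restrict (\<lambda>a. x (p a)) X"
        and i = "\<lambda>u i. if i < m - 1 then u (?q i) else \<one>\<^bsub>G\<^esub>"])
    fix x assume "x \<in> tup G m"
    then show "(\<lambda>i. if i < m - 1 then restrict (\<lambda>a. x (p a)) X (?q i) else \<one>\<^bsub>G\<^esub>) = x"
      and "restrict (\<lambda>a. x (p a)) X \<in> PiE X (\<lambda>_. carrier G)"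
      using q p_less by (auto simp: tup_def)
  next
    fix u assume "u \<in> PiE X (\<lambda>_. carrier G)"
    then show "restrict (\<lambda>a. if p a < m - 1 then u (?q (p a)) else \<one>\<^bsub>G\<^esub>) X = u"
      and "(\<lambda>i. if i < m - 1 then u (?q i) else \<one>\<^bsub>G\<^esub>) \<in> tup G m"
      using q p_less q_p by (auto simp: tup_def PiE_def extensional_def)
  qed simp
qed

lemma sum_tup_eq_sum_PiE:
  "(\<Sum>g\<in>tup G n. f g) = (\<Sum>w\<in>PiE {1..n-1} (\<lambda>_. carrier G). f (tuple_of G n w))"
proof -
  have shift: "bij_betw (\<lambda>j. j - 1) {1..n-1} {..<n - 1}"
    by (rule bij_betw_byWitness[where f' = Suc]) auto
  have "tuple_of G n (restrict (\<lambda>j. g (j - 1)) {1..n-1}) = g" if "g \<in> tup G n" for g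
    using that by (auto simp: tuple_of_def tup_def)
  then have "(\<Sum>g\<in>tup G n. f g) = (\<Sum>g\<in>tup G n. f (tuple_of G n (restrict (\<lambda>j. g (j - 1)) {1..n-1})))"
    by simp
  also have "\<dots> = (\<Sum>w\<in>PiE {1..n-1} (\<lambda>_. carrier G). f (tuple_of G n w))"
    by (rule sum_tup_reindex[OF shift])
  finally show ?thesis .
qed

lemma sum_PiE_fixed:
  assumes "finite T" "finite F" "finite S" "T \<inter> F = {}"
    and w: "\<And>a. a \<in> T \<Longrightarrow> w a \<in> S"
  shows "(\<Sum>u\<in>PiE (T \<union> F) (\<lambda>_. S). if \<forall>a\<in>T. u a = w a then H u else 0)
     = (\<Sum>v\<in>PiE F (\<lambda>_. S). H (\<lambda>a. if a \<in> T then w a else v a))"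
proof -
  let ?fixed = "{u\<in>PiE (T \<union> F) (\<lambda>_. S). \<forall>a\<in>T. u a = w a}"
  have "(\<Sum>u\<in>PiE (T \<union> F) (\<lambda>_. S). if \<forall>a\<in>T. u a = w a then H u else 0) = (\<Sum>u\<in>?fixed. H u)"
    by (rule sum.inter_filter[symmetric]) (simp add: assms finite_PiE)
  also have "\<dots> = (\<Sum>v\<in>PiE F (\<lambda>_. S). H (\<lambda>a. if a \<in> T then w a else v a))"
  proof (rule sum.reindex_bij_witness[where i = "\<lambda>v a. if a \<in> T then w a else v a"
        and j = "\<lambda>u. restrict u F"])
    fix u assume u: "u \<in> ?fixed"
    then show merge: "(\<lambda>a. if a \<in> T then w a else restrict u F a) = u"
      by (auto simp: PiE_def extensional_def)
    show "H (\<lambda>a. if a \<in> T then w a else restrict u F a) = H u"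
      by (simp only: merge)
    show "restrict u F \<in> PiE F (\<lambda>_. S)"
      using u by auto
  next
    fix v assume "v \<in> PiE F (\<lambda>_. S)"
    then show "restrict (\<lambda>a. if a \<in> T then w a else v a) F = v"
      and "(\<lambda>a. if a \<in> T then w a else v a) \<in> ?fixed"
      using assms(4) w by (auto simp: PiE_def extensional_def fun_eq_iff)
  qed
  finally show ?thesis .
qed

lemma sum_PiE_fixed_prod:
  fixes f h :: "'i \<Rightarrow> 'a \<Rightarrow> 'c :: comm_semiring_1"
  assumes "finite T" "finite F" "finite S" "T \<inter> F = {}"
    and w: "\<And>a. a \<in> T \<Longrightarrow> w a \<in> S"
  shows "(\<Sum>u\<in>PiE (T \<union> F) (\<lambda>_. S).
            if \<forall>a\<in>T. u a = w a then (\<Prod>a\<in>T. f a (u a)) * (\<Prod>a\<in>F. h a (u a)) else 0)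
       = (\<Prod>a\<in>T. f a (w a)) * (\<Prod>a\<in>F. \<Sum>t\<in>S. h a t)"
proof -
  have "(\<Sum>u\<in>PiE (T \<union> F) (\<lambda>_. S).
            if \<forall>a\<in>T. u a = w a then (\<Prod>a\<in>T. f a (u a)) * (\<Prod>a\<in>F. h a (u a)) else 0)
      = (\<Sum>v\<in>PiE F (\<lambda>_. S). (\<Prod>a\<in>T. f a (w a)) * (\<Prod>a\<in>F. h a (v a)))"
  proof -
    have "(\<Prod>a\<in>F. h a (if a \<in> T then w a else v a)) = (\<Prod>a\<in>F. h a (v a))" for v
      using assms(4) by (auto intro!: prod.cong)
    then show ?thesis
      by (simp add: sum_PiE_fixed[OF assms] cong: prod.cong)
  qed
  also have "\<dots> = (\<Prod>a\<in>T. f a (w a)) * (\<Prod>a\<in>F. \<Sum>t\<in>S. h a t)"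
    using assms by (simp add: prod_sum_PiE sum_distrib_left)
  finally show ?thesis .
qed

lemma triple_sum_swap:
  fixes a :: "'u \<Rightarrow> 'w \<Rightarrow> 'c::field"
  shows "(\<Sum>u\<in>U. \<Sum>v\<in>V. (\<Sum>w\<in>W. a u w * b v w * Q w) / K) =
    (\<Sum>w\<in>W. Q w * (\<Sum>u\<in>U. a u w) * (\<Sum>v\<in>V. b v w)) / K"
proof -
  have "(\<Sum>u\<in>U. \<Sum>v\<in>V. \<Sum>w\<in>W. a u w * b v w * Q w) = (\<Sum>w\<in>W. \<Sum>u\<in>U. \<Sum>v\<in>V. a u w * b v w * Q w)"
    by (subst sum.swap) (simp add: sum.swap[of _ V])
  then show ?thesis
    by (simp add: sum_divide_distrib [symmetric] sum_distrib_left sum_distrib_right mult_ac)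
qed

lemma alpha_char_relabel:
  assumes fin: "finite A" and f: "f \<in> Hn G Cl (card A)"
    and F: "\<And>x. x \<in> tup G (card A) \<Longrightarrow> f x = F (relabel A x)"
  shows "alpha_char G Cl \<alpha> (card A) f =
    (\<Sum>u\<in>PiE (nonlast A) (\<lambda>_. carrier G). F u * (\<Prod>a\<in>nonlast A. cnj (\<alpha> (u a))))
      / of_nat (card (carrier G)) ^ (card A - 1)"
proof -
  have "(\<Sum>x\<in>tup G (card A). f x * cnj (\<Prod>j<card A - 1. \<alpha> (x j))) =
      (\<Sum>x\<in>tup G (card A). (\<lambda>u. F u * (\<Prod>a\<in>nonlast A. cnj (\<alpha> (u a)))) (relabel A x))"
  proof (rule sum.cong[OF refl])
    fix x assume x: "x \<in> tup G (card A)"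
    have "(\<Prod>j<card A - 1. \<alpha> (x j)) = (\<Prod>a\<in>nonlast A. \<alpha> (x (pos A a)))"
      using prod.reindex_bij_betw[OF bij_betw_pos_nonlast[OF fin], of "\<lambda>i. \<alpha> (x i)"] by simp
    then show "f x * cnj (\<Prod>j<card A - 1. \<alpha> (x j)) = (\<lambda>u. F u * (\<Prod>a\<in>nonlast A. cnj (\<alpha> (u a)))) (relabel A x)"
      by (simp add: F[OF x] relabel_def)
  qed
  also have "\<dots> = (\<Sum>u\<in>PiE (nonlast A) (\<lambda>_. carrier G). F u * (\<Prod>a\<in>nonlast A. cnj (\<alpha> (u a))))"
    unfolding relabel_def by (rule sum_tup_reindex[OF bij_betw_pos_nonlast[OF fin]])
  finally show ?thesis
    using f by (simp add: alpha_char_def)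
qed

lemma alpha_char_coords:
  assumes "\<psi> \<in> Hn G Cl n"
  shows "alpha_char G Cl \<alpha> n \<psi> =
    (\<Sum>w\<in>PiE {1..n-1} (\<lambda>_. carrier G). \<psi> (tuple_of G n w) * (\<Prod>j\<in>{1..n-1}. cnj (\<alpha> (w j))))
      / of_nat (card (carrier G)) ^ (n - 1)"
proof -
  have "(\<Prod>j<n-1. cnj (\<alpha> (tuple_of G n w j))) = (\<Prod>j\<in>{1..n-1}. cnj (\<alpha> (w j)))" for w
    by (simp add: tuple_of_def prod.atLeast1_atMost_eq)
  then show ?thesis
    using assms by (simp add: alpha_char_def sum_tup_eq_sum_PiE)
qed

section \<open>The coproduct in coordinates\<close>

definition contraction ::
  "('a, 'b) monoid_scheme \<Rightarrow> ((nat \<Rightarrow> 'a) \<Rightarrow> complex) \<Rightarrow> ('a \<Rightarrow> complex) \<Rightarrow> nat \<Rightarrow> nat set \<Rightarrow>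
   (nat \<Rightarrow> 'a) \<Rightarrow> (nat \<Rightarrow> 'a) \<Rightarrow> complex" where
  "contraction G \<psi> \<alpha> n A u v = (\<Sum>w\<in>PiE {1..n-1} (\<lambda>_. carrier G).
     if (\<forall>j\<in>glued A. w j = u j) \<and> (\<forall>j\<in>glued ({1..n} - A). w j = v j)
     then \<psi> (tuple_of G n w) * (\<Prod>j\<in>cuts n A. cnj (\<alpha> (w j))) else 0)"

(* The summand of Delta_def for beta = alpha, in the coordinates u = relabel A x and
   v = relabel ({1..n} - A) y. *)
definition Delta_coords ::
  "('a, 'b) monoid_scheme \<Rightarrow> ('a \<Rightarrow> complex) \<Rightarrow> ('a \<Rightarrow> complex) \<Rightarrow> ((nat \<Rightarrow> 'a) \<Rightarrow> complex) \<Rightarrow>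
   nat \<Rightarrow> nat set \<Rightarrow> (nat \<Rightarrow> 'a) \<Rightarrow> (nat \<Rightarrow> 'a) \<Rightarrow> complex" where
  "Delta_coords G \<iota> \<alpha> \<psi> n A u v =
     (\<Prod>a\<in>breaks A. \<iota> (u a)) * (\<Prod>b\<in>breaks ({1..n} - A). \<iota> (v b)) *
     contraction G \<psi> \<alpha> n A u v / of_nat (card (carrier G)) ^ card (cuts n A)"

lemma Delta_condition_iff:
  assumes A: "A \<subseteq> {1..n}"
  defines "B \<equiv> {1..n} - A"
  shows "(\<forall>j\<in>{1..n-1}. (j \<in> A) = (Suc j \<in> A) \<longrightarrow>
      tuple_of G n w (j - 1) = (if j \<in> A then x (pos A j) else y (pos B j))) \<longleftrightarrow>
    (\<forall>j\<in>glued A. w j = relabel A x j) \<and> (\<forall>j\<in>glued B. w j = relabel B y j)"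
proof -
  have "finite A"
    using finite_subset[OF A] by simp
  then have glued_nonlast: "glued A \<subseteq> nonlast A" "glued B \<subseteq> nonlast B"
    by (simp_all add: B_def nonlast_eq_glued_Un_breaks)
  have glued_interval: "glued A \<subseteq> {1..n-1}" "glued B \<subseteq> {1..n-1}"
    using glued_subset_interval A by (auto simp: B_def)
  have agree: "{j\<in>{1..n-1}. (j \<in> A) = (Suc j \<in> A)} = glued A \<union> glued B"
  proof
    show "{j\<in>{1..n-1}. (j \<in> A) = (Suc j \<in> A)} \<subseteq> glued A \<union> glued B"
      by (auto simp: glued_def B_def)
    show "glued A \<union> glued B \<subseteq> {j\<in>{1..n-1}. (j \<in> A) = (Suc j \<in> A)}"
      using glued_interval by (auto simp: glued_def B_def)
  qed
  have shift: "tuple_of G n w (j - 1) = w j" if "j \<in> glued A \<union> glued B" for j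
  proof -
    have "j \<in> {1..n-1}"
      using that glued_interval by blast
    then show ?thesis by (auto simp: tuple_of_def)
  qed
  have in_A: "j \<in> A" "relabel A x j = x (pos A j)" if "j \<in> glued A" for j
    using glued_nonlast that by (auto simp: relabel_def glued_def)
  have notin_A: "j \<notin> A" "relabel B y j = y (pos B j)" if "j \<in> glued B" for j
    using glued_nonlast that by (auto simp: relabel_def glued_def B_def)
  have "(\<forall>j\<in>{1..n-1}. (j \<in> A) = (Suc j \<in> A) \<longrightarrow>
      tuple_of G n w (j - 1) = (if j \<in> A then x (pos A j) else y (pos B j))) \<longleftrightarrow>
    (\<forall>j\<in>glued A \<union> glued B. tuple_of G n w (j - 1) = (if j \<in> A then x (pos A j) else y (pos B j)))"
    unfolding agree[symmetric] by blast
  also have "\<dots> \<longleftrightarrow> (\<forall>j\<in>glued A \<union> glued B. w j = (if j \<in> A then x (pos A j) else y (pos B j)))"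
    by (rule ball_cong[OF refl]) (simp only: shift)
  also have "\<dots> \<longleftrightarrow> (\<forall>j\<in>glued A. w j = relabel A x j) \<and> (\<forall>j\<in>glued B. w j = relabel B y j)"
    unfolding ball_Un by (intro conj_cong ball_cong refl) (simp_all add: in_A notin_A)
  finally show ?thesis .
qed

lemma Delta_eq_Delta_coords:
  assumes fin: "finite (carrier G)" and A: "A \<subseteq> {1..n}"
    and x: "x \<in> tup G (card A)" and y: "y \<in> tup G (card ({1..n} - A))"
  shows "Delta G \<iota> \<alpha> \<alpha> n A \<psi> x y =
    Delta_coords G \<iota> \<alpha> \<psi> n A (relabel A x) (relabel ({1..n} - A) y)"
proof -
  define B where "B = {1..n} - A"
  let ?C = "{j\<in>{1..n-1}. (j \<in> A) \<noteq> (Suc j \<in> A)}"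
  let ?cond = "\<lambda>g. \<forall>j\<in>{1..n-1}. (j \<in> A) = (Suc j \<in> A) \<longrightarrow>
                 g (j - 1) = (if j \<in> A then x (pos A j) else y (pos B j))"
  let ?Q = "\<lambda>g. \<psi> g * (\<Prod>j\<in>?C. cnj ((if j \<in> A then \<alpha> else \<alpha>) (g (j - 1))))"
  have C: "?C = cuts n A"
    by (simp add: cuts_def)
  have "cnj ((if j \<in> A then \<alpha> else \<alpha>) (tuple_of G n w (j - 1))) = cnj (\<alpha> (w j))"
    if "j \<in> cuts n A" for j w
    using that tuple_of_shift[of j n G w] by (simp add: cuts_def)
  then have Q: "?Q (tuple_of G n w) = \<psi> (tuple_of G n w) * (\<Prod>j\<in>cuts n A. cnj (\<alpha> (w j)))" for w
    unfolding C by (simp cong: prod.cong)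
  have "(\<Sum>g\<in>{g\<in>tup G n. ?cond g}. ?Q g) = (\<Sum>g\<in>tup G n. if ?cond g then ?Q g else 0)"
    by (rule sum.inter_filter[OF finite_tup[OF fin]])
  also have "\<dots> = (\<Sum>w\<in>PiE {1..n-1} (\<lambda>_. carrier G).
      if ?cond (tuple_of G n w) then ?Q (tuple_of G n w) else 0)"
    by (rule sum_tup_eq_sum_PiE)
  also have "\<dots> = contraction G \<psi> \<alpha> n A (relabel A x) (relabel B y)"
    unfolding contraction_def B_def[symmetric] Delta_condition_iff[OF A, folded B_def] Q ..
  finally have contr: "(\<Sum>g\<in>{g\<in>tup G n. ?cond g}. ?Q g) = contraction G \<psi> \<alpha> n A (relabel A x) (relabel B y)" .
  have iotaA: "(\<Prod>a\<in>{a\<in>A. Suc a \<notin> A \<and> a < Max A}. \<iota> (x (pos A a))) = (\<Prod>a\<in>breaks A. \<iota> (relabel A x a))"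
    by (rule prod.cong) (auto simp: breaks_def relabel_def nonlast_def)
  have iotaB: "(\<Prod>b\<in>{b\<in>B. Suc b \<notin> B \<and> b < Max B}. \<iota> (y (pos B b))) = (\<Prod>b\<in>breaks B. \<iota> (relabel B y b))"
    by (rule prod.cong) (auto simp: breaks_def relabel_def nonlast_def)
  have "y \<in> tup G (card B)" using y by (simp add: B_def)
  then have "Delta G \<iota> \<alpha> \<alpha> n A \<psi> x y =
    (\<Prod>a\<in>{a\<in>A. Suc a \<notin> A \<and> a < Max A}. \<iota> (x (pos A a))) *
    (\<Prod>b\<in>{b\<in>B. Suc b \<notin> B \<and> b < Max B}. \<iota> (y (pos B b))) *
    (\<Sum>g\<in>{g\<in>tup G n. ?cond g}. ?Q g) / of_nat (card (carrier G)) ^ card ?C"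
    using x unfolding Delta_def Let_def B_def[symmetric] by (simp only: simp_thms if_True)
  also have "\<dots> = Delta_coords G \<iota> \<alpha> \<psi> n A (relabel A x) (relabel B y)"
    unfolding contr unfolding iotaA iotaB C Delta_coords_def B_def[symmetric] ..
  finally show ?thesis
    unfolding B_def .
qed

lemma Delta_outside:
  "x \<notin> tup G (card A) \<or> y \<notin> tup G (card ({1..n} - A)) \<Longrightarrow> Delta G \<iota> \<alpha> \<beta> n A \<psi> x y = 0"
  unfolding Delta_def Let_def by auto

lemma Delta_empty:
  assumes f: "f \<in> Hn G Cl n"
  shows "Delta G \<iota> \<alpha> \<beta> n {} f (\<lambda>_. \<one>\<^bsub>G\<^esub>) y = f y"
proof (cases "y \<in> tup G n")
  case False
  then show ?thesis
    using f by (simp add: Delta_def Hn_def)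
next
  case True
  have no_breaks: "{b \<in> {1..n}. Suc b \<notin> {1..n} \<and> b < Max {1..n}} = {}"
  proof (cases "n = 0")
    case False
    then have "Max {1..n} = n"
      by (simp add: Max_eq_iff)
    then show ?thesis by auto
  qed simp
  have "g = y" if "g \<in> tup G n" "\<forall>j\<in>{1..n-1}. g (j - 1) = y (pos {1..n} j)" for g
  proof
    fix i
    show "g i = y i"
    proof (cases "i < n - 1")
      case True
      then have "Suc i \<in> {1..n-1}" "Suc i \<in> {1..n}" by auto
      then show ?thesis
        using that(2) pos_interval by fastforce
    qed (use that(1) \<open>y \<in> tup G n\<close> in \<open>simp add: tup_def\<close>)
  qed
  then have "{g \<in> tup G n. \<forall>j\<in>{1..n-1}. g (j - 1) = y (pos {1..n} j)} = {y}"
    using True pos_interval by auto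
  then show ?thesis
    unfolding Delta_def Let_def Diff_empty no_breaks using True by (simp add: tup_0)
qed

(* The part of <psi^A, alpha_|A|> carried by the coordinates u of psi^A, given that the copied
   ones agree with the coordinates w of psi. *)
definition pairing_weight ::
  "('a \<Rightarrow> complex) \<Rightarrow> ('a \<Rightarrow> complex) \<Rightarrow> nat set \<Rightarrow> (nat \<Rightarrow> 'a) \<Rightarrow> (nat \<Rightarrow> 'a) \<Rightarrow> complex" where
  "pairing_weight \<iota> \<alpha> A u w =
     (if \<forall>j\<in>glued A. w j = u j
      then (\<Prod>j\<in>breaks A. \<iota> (u j)) * (\<Prod>j\<in>nonlast A. cnj (\<alpha> (u j))) else 0)"

lemma Delta_coords_pairing:
  "Delta_coords G \<iota> \<alpha> \<psi> n A u v * (\<Prod>b\<in>nonlast ({1..n} - A). cnj (\<alpha> (v b))) *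
      (\<Prod>a\<in>nonlast A. cnj (\<alpha> (u a))) =
    (\<Sum>w\<in>PiE {1..n-1} (\<lambda>_. carrier G).
       pairing_weight \<iota> \<alpha> A u w * pairing_weight \<iota> \<alpha> ({1..n} - A) v w *
       (\<psi> (tuple_of G n w) * (\<Prod>j\<in>cuts n A. cnj (\<alpha> (w j)))))
      / of_nat (card (carrier G)) ^ card (cuts n A)"
proof -
  let ?B = "{1..n} - A"
  let ?c = "(\<Prod>a\<in>breaks A. \<iota> (u a)) * (\<Prod>a\<in>nonlast A. cnj (\<alpha> (u a))) *
    ((\<Prod>b\<in>breaks ?B. \<iota> (v b)) * (\<Prod>b\<in>nonlast ?B. cnj (\<alpha> (v b))))"
  let ?Q = "\<lambda>w. \<psi> (tuple_of G n w) * (\<Prod>j\<in>cuts n A. cnj (\<alpha> (w j)))"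
  have "?c * (if (\<forall>j\<in>glued A. w j = u j) \<and> (\<forall>j\<in>glued ?B. w j = v j) then ?Q w else 0) =
      pairing_weight \<iota> \<alpha> A u w * pairing_weight \<iota> \<alpha> ?B v w * ?Q w" for w
    by (simp add: pairing_weight_def)
  then have "?c * contraction G \<psi> \<alpha> n A u v =
      (\<Sum>w\<in>PiE {1..n-1} (\<lambda>_. carrier G). pairing_weight \<iota> \<alpha> A u w * pairing_weight \<iota> \<alpha> ?B v w * ?Q w)"
    by (simp add: contraction_def sum_distrib_left)
  then show ?thesis
    by (simp add: Delta_coords_def ac_simps)
qed

section \<open>Invariance on superclasses\<close>

definition same_blocks :: "'a set set \<Rightarrow> 'i set \<Rightarrow> ('i \<Rightarrow> 'a) \<Rightarrow> ('i \<Rightarrow> 'a) \<Rightarrow> bool" where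
  "same_blocks Cl X u u' \<longleftrightarrow> (\<forall>a\<in>X. \<exists>K\<in>Cl. u a \<in> K \<and> u' a \<in> K)"

lemma same_blocks_subset: "same_blocks Cl X u u' \<Longrightarrow> Y \<subseteq> X \<Longrightarrow> same_blocks Cl Y u u'"
  by (auto simp: same_blocks_def)

lemma scf_eq_if_same_blocks:
  "f \<in> scf G Cl \<Longrightarrow> same_blocks Cl X u u' \<Longrightarrow> a \<in> X \<Longrightarrow> f (u a) = f (u' a)"
  by (auto simp: scf_def same_blocks_def)

lemma Hn_eq_if_same_blocks:
  "f \<in> Hn G Cl n \<Longrightarrow> g \<in> tup G n \<Longrightarrow> h \<in> tup G n \<Longrightarrow> same_blocks Cl {..<n-1} g h \<Longrightarrow> f g = f h"
  by (auto simp: Hn_def same_blocks_def)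

lemma HnI:
  assumes "\<And>g. g \<notin> tup G n \<Longrightarrow> f g = 0"
    and "\<And>g h. g \<in> tup G n \<Longrightarrow> h \<in> tup G n \<Longrightarrow> same_blocks Cl {..<n-1} g h \<Longrightarrow> f g = f h"
  shows "f \<in> Hn G Cl n"
  using assms by (auto simp: Hn_def same_blocks_def)

lemma same_blocks_tuple_of:
  "same_blocks Cl {1..n-1} w w' \<Longrightarrow> same_blocks Cl {..<n-1} (tuple_of G n w) (tuple_of G n w')"
  by (force simp: same_blocks_def tuple_of_def)

lemma same_blocks_relabel:
  assumes "finite A" "same_blocks Cl {..<card A - 1} x x'"
  shows "same_blocks Cl (nonlast A) (relabel A x) (relabel A x')"
  using assms bij_betwE[OF bij_betw_pos_nonlast[OF assms(1)]]
  by (auto simp: same_blocks_def relabel_def)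

lemma contraction_eq_sum_cuts:
  assumes fin: "finite (carrier G)" and A: "A \<subseteq> {1..n}"
    and u: "\<And>j. j \<in> glued A \<Longrightarrow> u j \<in> carrier G"
    and v: "\<And>j. j \<in> glued ({1..n} - A) \<Longrightarrow> v j \<in> carrier G"
  shows "contraction G \<psi> \<alpha> n A u v = (\<Sum>z\<in>PiE (cuts n A) (\<lambda>_. carrier G).
     \<psi> (tuple_of G n (\<lambda>j. if j \<in> glued A then u j else if j \<in> glued ({1..n} - A) then v j else z j)) *
     (\<Prod>j\<in>cuts n A. cnj (\<alpha> (z j))))"
proof -
  let ?T = "glued A \<union> glued ({1..n} - A)"
  let ?uv = "\<lambda>j. if j \<in> glued A then u j else v j"
  let ?H = "\<lambda>w. \<psi> (tuple_of G n w) * (\<Prod>j\<in>cuts n A. cnj (\<alpha> (w j)))"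
  have fin_T: "finite ?T" and fin_cuts: "finite (cuts n A)"
    using finite_subset[OF A] by (simp_all add: finite_glued cuts_def)
  have agree: "((\<forall>j\<in>glued A. w j = u j) \<and> (\<forall>j\<in>glued ({1..n} - A). w j = v j)) \<longleftrightarrow>
      (\<forall>j\<in>?T. w j = ?uv j)" for w
    using glued_Int_glued_compl[of A n] by auto
  have "contraction G \<psi> \<alpha> n A u v =
      (\<Sum>w\<in>PiE (?T \<union> cuts n A) (\<lambda>_. carrier G). if \<forall>j\<in>?T. w j = ?uv j then ?H w else 0)"
    unfolding contraction_def interval_eq_glued_Un_cuts[OF A] agree ..
  also have "\<dots> = (\<Sum>z\<in>PiE (cuts n A) (\<lambda>_. carrier G). ?H (\<lambda>j. if j \<in> ?T then ?uv j else z j))"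
    by (rule sum_PiE_fixed[OF fin_T fin_cuts fin glued_Un_glued_Int_cuts]) (use u v in auto)
  also have "\<dots> = (\<Sum>z\<in>PiE (cuts n A) (\<lambda>_. carrier G).
     \<psi> (tuple_of G n (\<lambda>j. if j \<in> glued A then u j else if j \<in> glued ({1..n} - A) then v j else z j)) *
     (\<Prod>j\<in>cuts n A. cnj (\<alpha> (z j))))"
  proof (rule sum.cong[OF refl])
    fix z
    have "(\<lambda>j. if j \<in> ?T then ?uv j else z j) =
        (\<lambda>j. if j \<in> glued A then u j else if j \<in> glued ({1..n} - A) then v j else z j)"
      by auto
    moreover have "(\<Prod>j\<in>cuts n A. cnj (\<alpha> (if j \<in> ?T then ?uv j else z j))) = (\<Prod>j\<in>cuts n A. cnj (\<alpha> (z j)))"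
      using glued_Un_glued_Int_cuts[of A n] by (auto intro!: prod.cong)
    ultimately show "?H (\<lambda>j. if j \<in> ?T then ?uv j else z j) =
        \<psi> (tuple_of G n (\<lambda>j. if j \<in> glued A then u j else if j \<in> glued ({1..n} - A) then v j else z j)) *
        (\<Prod>j\<in>cuts n A. cnj (\<alpha> (z j)))"
      by simp
  qed
  finally show ?thesis .
qed

context
  fixes G :: "('a, 'b) monoid_scheme" and Cl :: "'a set set"
  assumes fin: "finite (carrier G)" and partition: "partition_on (carrier G) Cl"
begin

lemma in_block_iff: "(\<exists>K\<in>Cl. t \<in> K) \<longleftrightarrow> t \<in> carrier G"
  using partition unfolding partition_on_def by blast

lemma same_blocks_refl: "(\<And>a. a \<in> X \<Longrightarrow> u a \<in> carrier G) \<Longrightarrow> same_blocks Cl X u u"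
  by (simp add: same_blocks_def in_block_iff)

lemma same_blocks_carrier: "same_blocks Cl X u u' \<Longrightarrow> a \<in> X \<Longrightarrow> u a \<in> carrier G \<and> u' a \<in> carrier G"
  using in_block_iff by (auto simp: same_blocks_def)

lemma same_blocks_tup_refl: "x \<in> tup G m \<Longrightarrow> same_blocks Cl {..<m - 1} x x"
  by (rule same_blocks_refl) (auto simp: tup_def)

lemma contraction_same_blocks:
  assumes A: "A \<subseteq> {1..n}" and psi: "\<psi> \<in> Hn G Cl n"
    and uu: "same_blocks Cl (glued A) u u'" and vv: "same_blocks Cl (glued ({1..n} - A)) v v'"
  shows "contraction G \<psi> \<alpha> n A u v = contraction G \<psi> \<alpha> n A u' v'"
proof -
  let ?B = "{1..n} - A"
  let ?m = "\<lambda>u v z j. if j \<in> glued A then u j else if j \<in> glued ?B then v j else z j"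
  have psi_eq: "\<psi> (tuple_of G n (?m u v z)) = \<psi> (tuple_of G n (?m u' v' z))"
    if z: "z \<in> PiE (cuts n A) (\<lambda>_. carrier G)" for z
  proof -
    have "same_blocks Cl {1..n-1} (?m u v z) (?m u' v' z)"
      unfolding interval_eq_glued_Un_cuts[OF A]
      using uu vv z glued_Un_glued_Int_cuts[of A n] in_block_iff
      by (fastforce simp: same_blocks_def)
    then show ?thesis
      by (intro Hn_eq_if_same_blocks[OF psi] same_blocks_tuple_of tuple_of_in_tup)
        (auto dest: same_blocks_carrier)
  qed
  have u: "u j \<in> carrier G" "u' j \<in> carrier G" if "j \<in> glued A" for j
    using same_blocks_carrier[OF uu that] by auto
  have v: "v j \<in> carrier G" "v' j \<in> carrier G" if "j \<in> glued ?B" for j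
    using same_blocks_carrier[OF vv that] by auto
  have "contraction G \<psi> \<alpha> n A u v =
      (\<Sum>z\<in>PiE (cuts n A) (\<lambda>_. carrier G). \<psi> (tuple_of G n (?m u v z)) * (\<Prod>j\<in>cuts n A. cnj (\<alpha> (z j))))"
    using u(1) v(1) by (rule contraction_eq_sum_cuts[OF fin A])
  also have "\<dots> =
      (\<Sum>z\<in>PiE (cuts n A) (\<lambda>_. carrier G). \<psi> (tuple_of G n (?m u' v' z)) * (\<Prod>j\<in>cuts n A. cnj (\<alpha> (z j))))"
    by (intro sum.cong refl) (simp add: psi_eq)
  also have "\<dots> = contraction G \<psi> \<alpha> n A u' v'"
    using u(2) v(2) by (rule contraction_eq_sum_cuts[OF fin A, symmetric])
  finally show ?thesis .
qed

lemma Delta_coords_same_blocks: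
  assumes iota: "\<iota> \<in> scf G Cl" and A: "A \<subseteq> {1..n}" and psi: "\<psi> \<in> Hn G Cl n"
    and uu: "same_blocks Cl (nonlast A) u u'" and vv: "same_blocks Cl (nonlast ({1..n} - A)) v v'"
  shows "Delta_coords G \<iota> \<alpha> \<psi> n A u v = Delta_coords G \<iota> \<alpha> \<psi> n A u' v'"
proof -
  have "finite A" using finite_subset[OF A] by simp
  then have "nonlast A = glued A \<union> breaks A" "nonlast ({1..n} - A) = glued ({1..n} - A) \<union> breaks ({1..n} - A)"
    by (simp_all add: nonlast_eq_glued_Un_breaks)
  then have glued: "same_blocks Cl (glued A) u u'" "same_blocks Cl (glued ({1..n} - A)) v v'"
    and breaks: "same_blocks Cl (breaks A) u u'" "same_blocks Cl (breaks ({1..n} - A)) v v'"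
    using uu vv by (auto intro: same_blocks_subset)
  have "(\<Prod>a\<in>breaks A. \<iota> (u a)) = (\<Prod>a\<in>breaks A. \<iota> (u' a))"
    "(\<Prod>b\<in>breaks ({1..n} - A). \<iota> (v b)) = (\<Prod>b\<in>breaks ({1..n} - A). \<iota> (v' b))"
    using scf_eq_if_same_blocks[OF iota] breaks by (auto intro!: prod.cong)
  then show ?thesis
    by (simp add: Delta_coords_def contraction_same_blocks[OF A psi glued])
qed

lemma Delta_same_blocks:
  assumes iota: "\<iota> \<in> scf G Cl" and A: "A \<subseteq> {1..n}" and psi: "\<psi> \<in> Hn G Cl n"
    and x: "x \<in> tup G (card A)" "x' \<in> tup G (card A)" and xx: "same_blocks Cl {..<card A - 1} x x'"
    and y: "y \<in> tup G (card ({1..n} - A))" "y' \<in> tup G (card ({1..n} - A))"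
    and yy: "same_blocks Cl {..<card ({1..n} - A) - 1} y y'"
  shows "Delta G \<iota> \<alpha> \<alpha> n A \<psi> x y = Delta G \<iota> \<alpha> \<alpha> n A \<psi> x' y'"
proof -
  have "finite A" "finite ({1..n} - A)"
    using finite_subset[OF A] by auto
  then have "Delta_coords G \<iota> \<alpha> \<psi> n A (relabel A x) (relabel ({1..n} - A) y) =
      Delta_coords G \<iota> \<alpha> \<psi> n A (relabel A x') (relabel ({1..n} - A) y')"
    by (intro Delta_coords_same_blocks[OF iota A psi] same_blocks_relabel xx yy)
  then show ?thesis
    unfolding Delta_eq_Delta_coords[OF fin A x(1) y(1)] Delta_eq_Delta_coords[OF fin A x(2) y(2)] .
qed

(* alpha_char vanishes outside Hn, so the slices of the coproduct must be superclass functions. *)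
lemma Delta_slice_in_Hn:
  assumes iota: "\<iota> \<in> scf G Cl" and A: "A \<subseteq> {1..n}" and psi: "\<psi> \<in> Hn G Cl n"
  shows "(\<lambda>y. Delta G \<iota> \<alpha> \<alpha> n A \<psi> x y) \<in> Hn G Cl (n - card A)"
proof -
  have B: "n - card A = card ({1..n} - A)"
    using finite_subset[OF A] A by (simp add: card_Diff_subset)
  show ?thesis
    unfolding B
  proof (rule HnI)
    show "Delta G \<iota> \<alpha> \<alpha> n A \<psi> x y = 0" if "y \<notin> tup G (card ({1..n} - A))" for y
      using that by (simp add: Delta_outside)
    show "Delta G \<iota> \<alpha> \<alpha> n A \<psi> x y = Delta G \<iota> \<alpha> \<alpha> n A \<psi> x y'"
      if "y \<in> tup G (card ({1..n} - A))" "y' \<in> tup G (card ({1..n} - A))"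
        and "same_blocks Cl {..<card ({1..n} - A) - 1} y y'" for y y'
    proof (cases "x \<in> tup G (card A)")
      case True
      then show ?thesis
        using that by (intro Delta_same_blocks[OF iota A psi] same_blocks_tup_refl)
    qed (simp add: Delta_outside)
  qed
qed

lemma functional_Delta_slice_in_Hn:
  assumes iota: "\<iota> \<in> scf G Cl" and A: "A \<subseteq> {1..n}" and psi: "\<psi> \<in> Hn G Cl n"
    and zero: "\<xi> (\<lambda>_. 0) = 0"
  shows "(\<lambda>x. \<xi> (\<lambda>y. Delta G \<iota> \<alpha> \<alpha> n A \<psi> x y)) \<in> Hn G Cl (card A)"
proof (rule HnI)
  show "\<xi> (\<lambda>y. Delta G \<iota> \<alpha> \<alpha> n A \<psi> x y) = 0" if "x \<notin> tup G (card A)" for x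
    using that zero by (simp add: Delta_outside)
  show "\<xi> (\<lambda>y. Delta G \<iota> \<alpha> \<alpha> n A \<psi> x y) = \<xi> (\<lambda>y. Delta G \<iota> \<alpha> \<alpha> n A \<psi> x' y)"
    if x: "x \<in> tup G (card A)" "x' \<in> tup G (card A)" and xx: "same_blocks Cl {..<card A - 1} x x'"
    for x x'
  proof -
    have "Delta G \<iota> \<alpha> \<alpha> n A \<psi> x y = Delta G \<iota> \<alpha> \<alpha> n A \<psi> x' y" for y
    proof (cases "y \<in> tup G (card ({1..n} - A))")
      case True
      then show ?thesis
        using x xx by (intro Delta_same_blocks[OF iota A psi] same_blocks_tup_refl)
    qed (simp add: Delta_outside)
    then show ?thesis by simp
  qed
qed

lemma iterated_alpha_char_Delta:
  assumes iota: "\<iota> \<in> scf G Cl" and A: "A \<subseteq> {1..n}" and psi: "\<psi> \<in> Hn G Cl n"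
  defines "B \<equiv> {1..n} - A" and "N \<equiv> of_nat (card (carrier G)) :: complex"
  shows "alpha_char G Cl \<alpha> (card A) (\<lambda>x. alpha_char G Cl \<alpha> (n - card A) (\<lambda>y. Delta G \<iota> \<alpha> \<alpha> n A \<psi> x y)) =
    (\<Sum>u\<in>PiE (nonlast A) (\<lambda>_. carrier G). \<Sum>v\<in>PiE (nonlast B) (\<lambda>_. carrier G).
      Delta_coords G \<iota> \<alpha> \<psi> n A u v * (\<Prod>b\<in>nonlast B. cnj (\<alpha> (v b))) * (\<Prod>a\<in>nonlast A. cnj (\<alpha> (u a))))
    / (N ^ (card B - 1) * N ^ (card A - 1))"
proof -
  let ?pb = "\<lambda>v. \<Prod>b\<in>nonlast B. cnj (\<alpha> (v b))"
  let ?I = "\<lambda>u. (\<Sum>v\<in>PiE (nonlast B) (\<lambda>_. carrier G). Delta_coords G \<iota> \<alpha> \<psi> n A u v * ?pb v) / N ^ (card B - 1)"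
  have fA: "finite A" and fB: "finite B"
    using finite_subset[OF A] by (auto simp: B_def)
  have card_B: "n - card A = card B"
    using fA A by (simp add: B_def card_Diff_subset)
  have inner: "alpha_char G Cl \<alpha> (n - card A) (\<lambda>y. Delta G \<iota> \<alpha> \<alpha> n A \<psi> x y) = ?I (relabel A x)"
    if x: "x \<in> tup G (card A)" for x
    unfolding card_B N_def
    by (rule alpha_char_relabel[OF fB])
      (use Delta_slice_in_Hn[OF iota A psi] Delta_eq_Delta_coords[OF fin A x] in
        \<open>simp_all add: card_B B_def\<close>)
  have outer_Hn: "(\<lambda>x. alpha_char G Cl \<alpha> (n - card A) (\<lambda>y. Delta G \<iota> \<alpha> \<alpha> n A \<psi> x y)) \<in> Hn G Cl (card A)"
    by (rule functional_Delta_slice_in_Hn[OF iota A psi]) (simp add: alpha_char_def Hn_def)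
  have "alpha_char G Cl \<alpha> (card A) (\<lambda>x. alpha_char G Cl \<alpha> (n - card A) (\<lambda>y. Delta G \<iota> \<alpha> \<alpha> n A \<psi> x y))
      = (\<Sum>u\<in>PiE (nonlast A) (\<lambda>_. carrier G). ?I u * (\<Prod>a\<in>nonlast A. cnj (\<alpha> (u a)))) / N ^ (card A - 1)"
    unfolding N_def by (rule alpha_char_relabel[OF fA outer_Hn inner[unfolded N_def]])
  then show ?thesis
    by (simp add: sum_distrib_left sum_divide_distrib mult_ac)
qed

end

section \<open>Graded functionals and convolution inverses\<close>

lemma graded_functional_zero:
  assumes "graded_functional G Cl \<xi>"
  shows "\<xi> n (\<lambda>_. 0) = 0"
proof -
  have scale: "\<xi> n (\<lambda>t. c * f t) = c * \<xi> n f" if "f \<in> Hn G Cl n" for c f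
    using assms that by (simp add: graded_functional_def)
  have "(\<lambda>_. 0) \<in> Hn G Cl n"
    by (simp add: Hn_def)
  from scale[OF this, of 0] show ?thesis
    by simp
qed

lemma graded_functional_outside: "graded_functional G Cl \<xi> \<Longrightarrow> f \<notin> Hn G Cl n \<Longrightarrow> \<xi> n f = 0"
  by (simp add: graded_functional_def)

lemma graded_functional_scale:
  "graded_functional G Cl \<xi> \<Longrightarrow> graded_functional G Cl (\<lambda>n f. c n * \<xi> n f)"
  by (simp add: graded_functional_def distrib_left mult.left_commute)

lemma Hn_add: "f \<in> Hn G Cl n \<Longrightarrow> h \<in> Hn G Cl n \<Longrightarrow> (\<lambda>t. f t + h t) \<in> Hn G Cl n"
  and Hn_scale: "f \<in> Hn G Cl n \<Longrightarrow> (\<lambda>t. c * f t) \<in> Hn G Cl n"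
  by (auto simp: Hn_def)

lemma graded_functional_alpha_char: "graded_functional G Cl (alpha_char G Cl \<alpha>)"
  unfolding graded_functional_def
  by (simp add: alpha_char_def Hn_add Hn_scale sum.distrib add_divide_distrib ring_distribs
      sum_distrib_left mult_ac)

lemma alpha_char_scale: "alpha_char G Cl \<alpha> m (\<lambda>x. c * f x) = c * alpha_char G Cl \<alpha> m f"
proof (cases "c = 0")
  case True
  then show ?thesis
    by (simp add: alpha_char_def Hn_def)
next
  case False
  then have "(\<lambda>x. c * f x) \<in> Hn G Cl m \<longleftrightarrow> f \<in> Hn G Cl m"
    by (auto simp: Hn_def)
  then show ?thesis
    by (simp add: alpha_char_def sum_distrib_left mult_ac)
qed

lemma alpha_char_degree_0: "f \<in> Hn G Cl 0 \<Longrightarrow> alpha_char G Cl \<alpha> 0 f = f (\<lambda>_. \<one>\<^bsub>G\<^esub>)"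
  by (simp add: alpha_char_def tup_0)

lemma sum_Pow_minus_one_pow_card:
  "(\<Sum>A\<in>Pow {1..n::nat}. (-1::'a::comm_ring_1) ^ card A) = (if n = 0 then 1 else 0)"
  using prod_diff_conv_sum[OF finite_atLeastAtMost, of "\<lambda>_. 1::'a" "\<lambda>_. 1" 1 n]
  by (simp add: power_0_left)

lemma sum_Pow_minus_one_pow_card_compl:
  "(\<Sum>A\<in>Pow {1..n::nat}. (-1::'a::comm_ring_1) ^ (n - card A)) = (if n = 0 then 1 else 0)"
  using prod_diff_conv_sum'[OF finite_atLeastAtMost, of "\<lambda>_. 1::'a" "\<lambda>_. 1" 1 n]
  by (simp add: power_0_left)

lemma conv_eq_plus_nonempty:
  assumes \<zeta>0: "\<And>f. f \<in> Hn G Cl 0 \<Longrightarrow> \<zeta> 0 f = f (\<lambda>_. \<one>\<^bsub>G\<^esub>)"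
    and \<xi>: "graded_functional G Cl \<xi>" and f: "f \<in> Hn G Cl n"
  shows "conv G \<iota> \<alpha> \<beta> \<zeta> \<xi> n f = \<xi> n f +
    (\<Sum>A\<in>Pow {1..n} - {{}}. \<zeta> (card A) (\<lambda>x. \<xi> (n - card A) (\<lambda>y. Delta G \<iota> \<alpha> \<beta> n A f x y)))"
proof -
  let ?F = "\<lambda>x. \<xi> n (\<lambda>y. Delta G \<iota> \<alpha> \<beta> n {} f x y)"
  have "?F \<in> Hn G Cl 0"
  proof (rule HnI)
    show "?F x = 0" if "x \<notin> tup G 0" for x
      using that graded_functional_zero[OF \<xi>] by (simp add: Delta_outside)
    show "?F g = ?F h" if "g \<in> tup G 0" "h \<in> tup G 0" for g h
      using that by (simp add: tup_0)
  qed
  moreover have "(\<lambda>y. Delta G \<iota> \<alpha> \<beta> n {} f (\<lambda>_. \<one>\<^bsub>G\<^esub>) y) = f"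
    using Delta_empty[OF f] by auto
  ultimately have "\<zeta> 0 ?F = \<xi> n f"
    using \<zeta>0 by simp
  then show ?thesis
    unfolding conv_def by (subst sum.remove[of _ "{}"]) auto
qed

lemma right_conv_inverse_unique:
  assumes \<zeta>0: "\<And>f. f \<in> Hn G Cl 0 \<Longrightarrow> \<zeta> 0 f = f (\<lambda>_. \<one>\<^bsub>G\<^esub>)"
    and \<xi>: "graded_functional G Cl \<xi>" and \<xi>': "graded_functional G Cl \<xi>'"
    and inv: "\<And>n \<psi>. \<psi> \<in> Hn G Cl n \<Longrightarrow> conv G \<iota> \<alpha> \<beta> \<zeta> \<xi> n \<psi> = counit G n \<psi>"
    and inv': "\<And>n \<psi>. \<psi> \<in> Hn G Cl n \<Longrightarrow> conv G \<iota> \<alpha> \<beta> \<zeta> \<xi>' n \<psi> = counit G n \<psi>"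
  shows "\<xi> = \<xi>'"
proof -
  have "\<xi> n f = \<xi>' n f" for n f
  proof (induction n arbitrary: f rule: less_induct)
    case (less n)
    show ?case
    proof (cases "f \<in> Hn G Cl n")
      case False
      then show ?thesis
        by (simp add: graded_functional_outside[OF \<xi>] graded_functional_outside[OF \<xi>'])
    next
      case True
      let ?rest = "\<lambda>\<xi>. \<Sum>A\<in>Pow {1..n} - {{}}. \<zeta> (card A) (\<lambda>x. \<xi> (n - card A) (\<lambda>y. Delta G \<iota> \<alpha> \<beta> n A f x y))"
      have "\<zeta> (card A) (\<lambda>x. \<xi> (n - card A) (\<lambda>y. Delta G \<iota> \<alpha> \<beta> n A f x y)) =
          \<zeta> (card A) (\<lambda>x. \<xi>' (n - card A) (\<lambda>y. Delta G \<iota> \<alpha> \<beta> n A f x y))"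
        if A: "A \<in> Pow {1..n} - {{}}" for A
      proof -
        have "finite A" "A \<noteq> {}"
          using A finite_subset[of A "{1..n}"] by auto
        then have "card A > 0"
          by (simp add: card_gt_0_iff)
        moreover have "card A \<le> n"
          using A card_mono[of "{1..n}" A] by auto
        ultimately have "n - card A < n"
          by simp
        then show ?thesis
          using less.IH by simp
      qed
      then have rest: "?rest \<xi> = ?rest \<xi>'"
        by (rule sum.cong[OF refl])
      have "\<xi> n f + ?rest \<xi> = conv G \<iota> \<alpha> \<beta> \<zeta> \<xi> n f"
        by (rule conv_eq_plus_nonempty[where \<zeta> = \<zeta>, OF \<zeta>0 \<xi> True, symmetric])
      also have "\<dots> = conv G \<iota> \<alpha> \<beta> \<zeta> \<xi>' n f"
        by (simp only: inv[OF True] inv'[OF True])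
      also have "\<dots> = \<xi>' n f + ?rest \<xi>'"
        by (rule conv_eq_plus_nonempty[where \<zeta> = \<zeta>, OF \<zeta>0 \<xi>' True])
      finally show ?thesis
        unfolding rest by simp
    qed
  qed
  then show ?thesis
    by (simp add: fun_eq_iff)
qed

lemma conv_inv_eqI:
  assumes \<zeta>0: "\<And>f. f \<in> Hn G Cl 0 \<Longrightarrow> \<zeta> 0 f = f (\<lambda>_. \<one>\<^bsub>G\<^esub>)"
    and \<xi>: "graded_functional G Cl \<xi>"
    and right: "\<And>n \<psi>. \<psi> \<in> Hn G Cl n \<Longrightarrow> conv G \<iota> \<alpha> \<beta> \<zeta> \<xi> n \<psi> = counit G n \<psi>"
    and left: "\<And>n \<psi>. \<psi> \<in> Hn G Cl n \<Longrightarrow> conv G \<iota> \<alpha> \<beta> \<xi> \<zeta> n \<psi> = counit G n \<psi>"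
  shows "conv_inv G Cl \<iota> \<alpha> \<beta> \<zeta> = \<xi>"
  unfolding conv_inv_def
proof (rule the_equality)
  show "graded_functional G Cl \<xi> \<and> (\<forall>n. \<forall>\<psi>\<in>Hn G Cl n.
      conv G \<iota> \<alpha> \<beta> \<zeta> \<xi> n \<psi> = counit G n \<psi> \<and> conv G \<iota> \<alpha> \<beta> \<xi> \<zeta> n \<psi> = counit G n \<psi>)"
    using \<xi> right left by blast
  show "\<xi>' = \<xi>" if "graded_functional G Cl \<xi>' \<and> (\<forall>n. \<forall>\<psi>\<in>Hn G Cl n.
      conv G \<iota> \<alpha> \<beta> \<zeta> \<xi>' n \<psi> = counit G n \<psi> \<and> conv G \<iota> \<alpha> \<beta> \<xi>' \<zeta> n \<psi> = counit G n \<psi>)" for \<xi>'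
  proof -
    have "graded_functional G Cl \<xi>'"
      and "\<And>n \<psi>. \<psi> \<in> Hn G Cl n \<Longrightarrow> conv G \<iota> \<alpha> \<beta> \<zeta> \<xi>' n \<psi> = counit G n \<psi>"
      using that by blast+
    then show ?thesis
      using right_conv_inverse_unique[where \<zeta> = \<zeta> and \<xi> = \<xi>' and \<xi>' = \<xi>, OF \<zeta>0 _ \<xi>] right by blast
  qed
qed

section \<open>Multiplicativity of alpha_char\<close>

context
  fixes G :: "('a, 'b) monoid_scheme" and Cl :: "'a set set" and \<iota> \<alpha> :: "'a \<Rightarrow> complex"
  assumes fin: "finite (carrier G)" and partition: "partition_on (carrier G) Cl"
    and iota: "\<iota> \<in> scf G Cl" and ip: "ip G \<iota> \<alpha> = 1"
begin

lemma card_carrier_neq_0: "(of_nat (card (carrier G)) :: complex) \<noteq> 0"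
  using ip by (auto simp: ip_def)

lemma sum_iota_cnj_alpha: "(\<Sum>t\<in>carrier G. \<iota> t * cnj (\<alpha> t)) = of_nat (card (carrier G))"
  using ip card_carrier_neq_0 by (simp add: ip_def field_simps)

(* Here <iota, alpha> = 1 enters: each break contributes sum_t iota t * cnj (alpha t) = |G|. *)
lemma sum_pairing_weight:
  assumes fA: "finite A" and w: "\<And>j. j \<in> glued A \<Longrightarrow> w j \<in> carrier G"
  shows "(\<Sum>u\<in>PiE (nonlast A) (\<lambda>_. carrier G). pairing_weight \<iota> \<alpha> A u w) =
    (\<Prod>j\<in>glued A. cnj (\<alpha> (w j))) * of_nat (card (carrier G)) ^ card (breaks A)"
proof -
  have fin_parts: "finite (glued A)" "finite (breaks A)"
    using fA by (simp_all add: finite_glued finite_breaks)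
  have "pairing_weight \<iota> \<alpha> A u w =
      (if \<forall>j\<in>glued A. u j = w j
       then (\<Prod>j\<in>glued A. cnj (\<alpha> (u j))) * (\<Prod>j\<in>breaks A. \<iota> (u j) * cnj (\<alpha> (u j))) else 0)" for u
    by (auto simp: pairing_weight_def nonlast_eq_glued_Un_breaks[OF fA] prod.distrib
        prod.union_disjoint[OF fin_parts glued_Int_breaks])
  then have "(\<Sum>u\<in>PiE (nonlast A) (\<lambda>_. carrier G). pairing_weight \<iota> \<alpha> A u w) =
      (\<Prod>j\<in>glued A. cnj (\<alpha> (w j))) * (\<Prod>j\<in>breaks A. \<Sum>t\<in>carrier G. \<iota> t * cnj (\<alpha> t))"
    unfolding nonlast_eq_glued_Un_breaks[OF fA]
    using sum_PiE_fixed_prod[OF fin_parts fin glued_Int_breaks w,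
        where f = "\<lambda>_ t. cnj (\<alpha> t)" and h = "\<lambda>_ t. \<iota> t * cnj (\<alpha> t)"]
    by simp
  then show ?thesis
    by (simp add: sum_iota_cnj_alpha)
qed

lemma sum_Delta_coords_pairing:
  assumes A: "A \<subseteq> {1..n}" and psi: "\<psi> \<in> Hn G Cl n"
  defines "B \<equiv> {1..n} - A" and "N \<equiv> of_nat (card (carrier G)) :: complex"
  shows "(\<Sum>u\<in>PiE (nonlast A) (\<lambda>_. carrier G). \<Sum>v\<in>PiE (nonlast B) (\<lambda>_. carrier G).
      Delta_coords G \<iota> \<alpha> \<psi> n A u v * (\<Prod>b\<in>nonlast B. cnj (\<alpha> (v b))) * (\<Prod>a\<in>nonlast A. cnj (\<alpha> (u a))))
    = alpha_char G Cl \<alpha> n \<psi> * N ^ (n - 1) * N ^ (card (breaks A) + card (breaks B)) / N ^ card (cuts n A)"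
proof -
  let ?PA = "PiE (nonlast A) (\<lambda>_. carrier G)"
  let ?PB = "PiE (nonlast B) (\<lambda>_. carrier G)"
  let ?W = "PiE {1..n-1} (\<lambda>_. carrier G)"
  let ?Q = "\<lambda>w. \<psi> (tuple_of G n w) * (\<Prod>j\<in>cuts n A. cnj (\<alpha> (w j)))"
  have fA: "finite A" and fB: "finite B"
    using finite_subset[OF A] by (auto simp: B_def)
  have pointwise: "?Q w * (\<Sum>u\<in>?PA. pairing_weight \<iota> \<alpha> A u w) * (\<Sum>v\<in>?PB. pairing_weight \<iota> \<alpha> B v w) =
      \<psi> (tuple_of G n w) * (\<Prod>j\<in>{1..n-1}. cnj (\<alpha> (w j))) * N ^ (card (breaks A) + card (breaks B))"
    if w: "w \<in> ?W" for w
  proof -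
    have "glued A \<subseteq> {1..n-1}" "glued B \<subseteq> {1..n-1}"
      using glued_subset_interval A by (auto simp: B_def)
    then have "\<And>j. j \<in> glued A \<Longrightarrow> w j \<in> carrier G" "\<And>j. j \<in> glued B \<Longrightarrow> w j \<in> carrier G"
      using w by auto
    moreover have "(\<Prod>j\<in>{1..n-1}. cnj (\<alpha> (w j))) =
        (\<Prod>j\<in>glued A. cnj (\<alpha> (w j))) * (\<Prod>j\<in>glued B. cnj (\<alpha> (w j))) * (\<Prod>j\<in>cuts n A. cnj (\<alpha> (w j)))"
      unfolding interval_eq_glued_Un_cuts[OF A] B_def
      using fA glued_Int_glued_compl[of A n] glued_Un_glued_Int_cuts[of A n]
      by (simp add: prod.union_disjoint finite_glued cuts_def)
    ultimately show ?thesis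
      by (simp add: sum_pairing_weight fA fB N_def power_add mult_ac)
  qed
  have "(\<Sum>u\<in>?PA. \<Sum>v\<in>?PB.
      Delta_coords G \<iota> \<alpha> \<psi> n A u v * (\<Prod>b\<in>nonlast B. cnj (\<alpha> (v b))) * (\<Prod>a\<in>nonlast A. cnj (\<alpha> (u a))))
    = (\<Sum>u\<in>?PA. \<Sum>v\<in>?PB. (\<Sum>w\<in>?W. pairing_weight \<iota> \<alpha> A u w * pairing_weight \<iota> \<alpha> B v w * ?Q w)
        / N ^ card (cuts n A))"
    unfolding B_def N_def Delta_coords_pairing ..
  also have "\<dots> = (\<Sum>w\<in>?W. ?Q w * (\<Sum>u\<in>?PA. pairing_weight \<iota> \<alpha> A u w) * (\<Sum>v\<in>?PB. pairing_weight \<iota> \<alpha> B v w))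
        / N ^ card (cuts n A)"
    by (rule triple_sum_swap)
  also have "\<dots> = (\<Sum>w\<in>?W. \<psi> (tuple_of G n w) * (\<Prod>j\<in>{1..n-1}. cnj (\<alpha> (w j))))
        * N ^ (card (breaks A) + card (breaks B)) / N ^ card (cuts n A)"
    unfolding sum_distrib_right by (simp only: sum.cong[OF refl pointwise])
  also have "(\<Sum>w\<in>?W. \<psi> (tuple_of G n w) * (\<Prod>j\<in>{1..n-1}. cnj (\<alpha> (w j)))) =
      alpha_char G Cl \<alpha> n \<psi> * N ^ (n - 1)"
    using alpha_char_coords[OF psi] card_carrier_neq_0 by (simp add: N_def)
  finally show ?thesis .
qed

lemma alpha_char_Delta:
  assumes A: "A \<subseteq> {1..n}" and psi: "\<psi> \<in> Hn G Cl n"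
  shows "alpha_char G Cl \<alpha> (card A) (\<lambda>x. alpha_char G Cl \<alpha> (n - card A) (\<lambda>y. Delta G \<iota> \<alpha> \<alpha> n A \<psi> x y))
    = alpha_char G Cl \<alpha> n \<psi>"
proof -
  define B where "B = {1..n} - A"
  define N where "N = (of_nat (card (carrier G)) :: complex)"
  have fA: "finite A" and fB: "finite B"
    using finite_subset[OF A] by (auto simp: B_def)
  have exponents: "card (cuts n A) + (card B - 1) + (card A - 1) = (n - 1) + (card (breaks A) + card (breaks B))"
    using card_interval_split[OF A] card_nonlast_split[OF fA] card_nonlast_split[OF fB]
    by (simp add: B_def)
  have "alpha_char G Cl \<alpha> (card A) (\<lambda>x. alpha_char G Cl \<alpha> (n - card A) (\<lambda>y. Delta G \<iota> \<alpha> \<alpha> n A \<psi> x y)) =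
      alpha_char G Cl \<alpha> n \<psi> * N ^ (n - 1) * N ^ (card (breaks A) + card (breaks B)) / N ^ card (cuts n A)
        / (N ^ (card B - 1) * N ^ (card A - 1))"
    using iterated_alpha_char_Delta[OF fin partition iota A psi] sum_Delta_coords_pairing[OF A psi]
    by (simp add: B_def N_def)
  also have "\<dots> = alpha_char G Cl \<alpha> n \<psi> * N ^ ((n - 1) + (card (breaks A) + card (breaks B)))
      / N ^ (card (cuts n A) + (card B - 1) + (card A - 1))"
    by (simp add: power_add mult.assoc)
  also have "\<dots> = alpha_char G Cl \<alpha> n \<psi>"
    using card_carrier_neq_0 by (simp only: exponents) (simp add: N_def)
  finally show ?thesis .
qed

lemma conv_scaled_alpha_char:
  assumes "\<psi> \<in> Hn G Cl n"
  shows "conv G \<iota> \<alpha> \<alpha> (\<lambda>k f. a k * alpha_char G Cl \<alpha> k f) (\<lambda>k f. b k * alpha_char G Cl \<alpha> k f) n \<psi> =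
    (\<Sum>A\<in>Pow {1..n}. a (card A) * b (n - card A)) * alpha_char G Cl \<alpha> n \<psi>"
  unfolding conv_def sum_distrib_right
  by (intro sum.cong refl)
    (simp add: alpha_char_scale alpha_char_Delta[OF _ assms])

lemma counit_eq_alpha_char:
  "\<psi> \<in> Hn G Cl n \<Longrightarrow> counit G n \<psi> = (if n = 0 then 1 else 0) * alpha_char G Cl \<alpha> n \<psi>"
  by (cases "n = 0") (simp_all add: counit_def alpha_char_degree_0)

lemma conv_alpha_char_signed:
  "\<psi> \<in> Hn G Cl n \<Longrightarrow>
    conv G \<iota> \<alpha> \<alpha> (alpha_char G Cl \<alpha>) (\<lambda>k f. (-1) ^ k * alpha_char G Cl \<alpha> k f) n \<psi> = counit G n \<psi>"
  using conv_scaled_alpha_char[of \<psi> n "\<lambda>_. 1" "\<lambda>k. (-1) ^ k"]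
    sum_Pow_minus_one_pow_card_compl[of n, where 'a = complex]
  by (simp add: counit_eq_alpha_char)

lemma conv_signed_alpha_char:
  "\<psi> \<in> Hn G Cl n \<Longrightarrow>
    conv G \<iota> \<alpha> \<alpha> (\<lambda>k f. (-1) ^ k * alpha_char G Cl \<alpha> k f) (alpha_char G Cl \<alpha>) n \<psi> = counit G n \<psi>"
  using conv_scaled_alpha_char[of \<psi> n "\<lambda>k. (-1) ^ k" "\<lambda>_. 1"]
    sum_Pow_minus_one_pow_card[of n, where 'a = complex]
  by (simp add: counit_eq_alpha_char)

end

theorem mainTheorem8:
  fixes G :: "('a, 'b) monoid_scheme" and Cl :: "'a set set" and Ch :: "('a \<Rightarrow> complex) set"
    and \<iota> \<alpha> :: "'a \<Rightarrow> complex"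
  assumes "group G" and "finite (carrier G)"
    and "supercharacter_theory G Cl Ch"
    and "\<iota> \<in> scf G Cl" and "\<alpha> \<in> scf G Cl"
    and "ip G \<iota> \<alpha> = 1"
  shows "\<forall>n. \<forall>\<gamma>\<in>Hn G Cl n.
           conv_inv G Cl \<iota> \<alpha> \<alpha> (alpha_char G Cl \<alpha>) n \<gamma> = (-1) ^ n * alpha_char G Cl \<alpha> n \<gamma>"
proof -
  have partition: "partition_on (carrier G) Cl"
    using assms(3) by (simp add: supercharacter_theory_def)
  have "conv_inv G Cl \<iota> \<alpha> \<alpha> (alpha_char G Cl \<alpha>) = (\<lambda>n f. (-1) ^ n * alpha_char G Cl \<alpha> n f)"
  proof (rule conv_inv_eqI)
    show "alpha_char G Cl \<alpha> 0 f = f (\<lambda>_. \<one>\<^bsub>G\<^esub>)" if "f \<in> Hn G Cl 0" for f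
      using that by (rule alpha_char_degree_0)
    show "graded_functional G Cl (\<lambda>n f. (-1) ^ n * alpha_char G Cl \<alpha> n f)"
      by (intro graded_functional_scale graded_functional_alpha_char)
    show "conv G \<iota> \<alpha> \<alpha> (alpha_char G Cl \<alpha>) (\<lambda>n f. (-1) ^ n * alpha_char G Cl \<alpha> n f) n \<psi> = counit G n \<psi>"
      and "conv G \<iota> \<alpha> \<alpha> (\<lambda>n f. (-1) ^ n * alpha_char G Cl \<alpha> n f) (alpha_char G Cl \<alpha>) n \<psi> = counit G n \<psi>"
      if "\<psi> \<in> Hn G Cl n" for n \<psi>
      using conv_alpha_char_signed[OF assms(2) partition assms(4,6) that]
        conv_signed_alpha_char[OF assms(2) partition assms(4,6) that]
      by simp_all
  qed
  then show ?thesis by simp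
qed

end
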